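(* Let $\mathcal{G}=(V,E)$ be a DAG with $V=[n]$, let $i,j\in V$ be distinct and $K\subseteq V\setminus\{i,j\}$ such that $K$ does not $d$-separate $i$ from $j$ in $\mathcal{G}$. Let $a,b\in[n]$ be distinct and $C\subseteq[n]\setminus\{a,b\}$. If \[ \phi_\mathcal{G}^\ast(\det\Sigma_{\{a\}\cup C,\{b\}\cup C})\in \langle \phi_\mathcal{G}^\ast(\det\Sigma_{\{i\}\cup K,\{j\}\cup K})\rangle : \Big(\prod_{S\subseteq V}\phi_\mathcal{G}^\ast(\det\Sigma_{S,S})\Big)^\infty, \] then $a\perp\!\!\!\perp b\mid C$ holds for every $\Sigma\in\mathcal{M}_{\mathcal{G},i\perp\!\!\!\perp j|K}$, i.e. $\det\Sigma_{\{a\}\cup C,\{b\}\cup C}=0$ for all such $\Sigma$.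
   Context: For a DAG $\mathcal{G}=(V,E)$ on $V=[n]$, let $\Lambda=(\lambda_{ij})$ with $\lambda_{ij}$ a free parameter if $i\to j\in E$ and $0$ otherwise, and $\Omega=\mathrm{diag}(\omega_1,\dots,\omega_n)$. Let $\phi_\mathcal{G}(\Lambda,\Omega)=(I-\Lambda)^{-T}\Omega(I-\Lambda)^{-1}$ and $\mathcal{M}_\mathcal{G}=\phi_\mathcal{G}(\mathbb{R}^E\times(0,\infty)^n)$, a set of positive definite matrices. $\mathbb{R}[\lambda,\omega]$ is the polynomial ring in the $\lambda_{ij}$ ($i\to j\in E$) and the $\omega_k$; $\phi_\mathcal{G}^\ast:\mathbb{R}[\sigma_{uv}]\to\mathbb{R}[\lambda,\omega]$ is the ring homomorphism sending $\sigma_{uv}$ to the $(u,v)$ entry of $\phi_\mathcal{G}(\Lambda,\Omega)$. $\Sigma_{A,B}$ is the submatrix with rows $A$, columns $B$. $\mathcal{M}_{\mathcal{G},i\perp\!\!\!\perp j|K}$ is the set of $\Sigma\in\mathcal{M}_\mathcal{G}$ with $\det\Sigma_{\{i\}\cup K,\{j\}\cup K}=0$. For an ideal $I$ and polynomial $g$, the saturation is $I:g^\infty=\{f: fg^k\in I\text{ for some }k\ge0\}$. $d$-separation is the standard criterion: $C$ $d$-separates $a,b$ if every path between them contains a non-collider in $C$ or a collider not in $C$ with no descendant in $C$. *)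

theory Defs
  imports Complex_Main "HOL-Library.Poly_Mapping" "HOL-Combinatorics.Permutations"
begin

text \<open>A DAG on V = [n] = {1..n}: a set of directed edges E (pairs (i,j) meaning i -> j)
  between vertices in [n], without directed cycles.\<close>

definition is_dag :: "nat \<Rightarrow> (nat \<times> nat) set \<Rightarrow> bool" where
  "is_dag n E \<longleftrightarrow> E \<subseteq> {1..n} \<times> {1..n} \<and> acyclic E"

definition adjacent :: "(nat \<times> nat) set \<Rightarrow> nat \<Rightarrow> nat \<Rightarrow> bool" where
  "adjacent E u v \<longleftrightarrow> (u, v) \<in> E \<or> (v, u) \<in> E"

definition is_path :: "(nat \<times> nat) set \<Rightarrow> nat list \<Rightarrow> nat \<Rightarrow> nat \<Rightarrow> bool" where
  "is_path E p a b \<longleftrightarrow> p \<noteq> [] \<and> hd p = a \<and> last p = b \<and> distinct p \<and>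
     (\<forall>t. Suc t < length p \<longrightarrow> adjacent E (p ! t) (p ! Suc t))"

definition is_collider :: "(nat \<times> nat) set \<Rightarrow> nat list \<Rightarrow> nat \<Rightarrow> bool" where
  "is_collider E p t \<longleftrightarrow> (p ! (t - 1), p ! t) \<in> E \<and> (p ! Suc t, p ! t) \<in> E"

definition descendants :: "(nat \<times> nat) set \<Rightarrow> nat \<Rightarrow> nat set" where
  "descendants E v = {w. (v, w) \<in> E\<^sup>*}"

definition path_blocked :: "(nat \<times> nat) set \<Rightarrow> nat set \<Rightarrow> nat list \<Rightarrow> bool" where
  "path_blocked E C p \<longleftrightarrow>
     (\<exists>t. 0 < t \<and> Suc t < length p \<and>
        ((\<not> is_collider E p t \<and> p ! t \<in> C) \<or>
         (is_collider E p t \<and> p ! t \<notin> C \<and> descendants E (p ! t) \<inter> C = {})))"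

definition d_separates :: "(nat \<times> nat) set \<Rightarrow> nat set \<Rightarrow> nat \<Rightarrow> nat \<Rightarrow> bool" where
  "d_separates E C a b \<longleftrightarrow> (\<forall>p. is_path E p a b \<longrightarrow> path_blocked E C p)"

definition mat_mult :: "nat \<Rightarrow> (nat \<Rightarrow> nat \<Rightarrow> 'a::comm_ring_1) \<Rightarrow> (nat \<Rightarrow> nat \<Rightarrow> 'a) \<Rightarrow> nat \<Rightarrow> nat \<Rightarrow> 'a" where
  "mat_mult n A B i j = (\<Sum>k\<in>{1..n}. A i k * B k j)"

definition mat_id :: "nat \<Rightarrow> nat \<Rightarrow> 'a::comm_ring_1" where
  "mat_id i j = (if i = j then 1 else 0)"

fun mat_pow :: "nat \<Rightarrow> (nat \<Rightarrow> nat \<Rightarrow> 'a::comm_ring_1) \<Rightarrow> nat \<Rightarrow> nat \<Rightarrow> nat \<Rightarrow> 'a" where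
  "mat_pow n A 0 = mat_id"
| "mat_pow n A (Suc k) = mat_mult n (mat_pow n A k) A"

text \<open>(I - Lambda)^{-1}. For Lambda supported on the edges of a DAG on [n], Lambda is nilpotent
  (Lambda^n = 0), so (I - Lambda)^{-1} is the finite Neumann sum I + Lambda + ... + Lambda^(n-1).\<close>

definition inv_I_minus :: "nat \<Rightarrow> (nat \<Rightarrow> nat \<Rightarrow> 'a::comm_ring_1) \<Rightarrow> nat \<Rightarrow> nat \<Rightarrow> 'a" where
  "inv_I_minus n L i j = (\<Sum>k<n. mat_pow n L k i j)"

text \<open>phi_G(Lambda, Omega) = (I - Lambda)^{-T} Omega (I - Lambda)^{-1}, Omega = diag(w).\<close>

definition phi :: "nat \<Rightarrow> (nat \<Rightarrow> nat \<Rightarrow> 'a::comm_ring_1) \<Rightarrow> (nat \<Rightarrow> 'a) \<Rightarrow> nat \<Rightarrow> nat \<Rightarrow> 'a" where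
  "phi n L w u v = (\<Sum>k\<in>{1..n}. inv_I_minus n L k u * w k * inv_I_minus n L k v)"

text \<open>Determinant of the submatrix with rows indexed (in order) by list rs and columns by cs
  (Leibniz formula). Choice of orderings only affects the sign.\<close>

definition minor :: "(nat \<Rightarrow> nat \<Rightarrow> 'a::comm_ring_1) \<Rightarrow> nat list \<Rightarrow> nat list \<Rightarrow> 'a" where
  "minor M rs cs = (\<Sum>p | p permutes {..<length rs}.
      of_int (sign p) * (\<Prod>t<length rs. M (rs ! t) (cs ! p t)))"

text \<open>det Sigma_{{a} u C, {b} u C}: rows a, then C in increasing order; columns b, then C.\<close>

definition ci_minor :: "(nat \<Rightarrow> nat \<Rightarrow> 'a::comm_ring_1) \<Rightarrow> nat \<Rightarrow> nat \<Rightarrow> nat set \<Rightarrow> 'a" where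
  "ci_minor M a b C = minor M (a # sorted_list_of_set C) (b # sorted_list_of_set C)"

definition principal_minor :: "(nat \<Rightarrow> nat \<Rightarrow> 'a::comm_ring_1) \<Rightarrow> nat set \<Rightarrow> 'a" where
  "principal_minor M S = minor M (sorted_list_of_set S) (sorted_list_of_set S)"

definition model :: "nat \<Rightarrow> (nat \<times> nat) set \<Rightarrow> (nat \<Rightarrow> nat \<Rightarrow> real) set" where
  "model n E = {phi n L w | L w.
      (\<forall>i j. (i, j) \<notin> E \<longrightarrow> L i j = 0) \<and> (\<forall>k\<in>{1..n}. w k > 0)}"

definition ci_model :: "nat \<Rightarrow> (nat \<times> nat) set \<Rightarrow> nat \<Rightarrow> nat \<Rightarrow> nat set \<Rightarrow> (nat \<Rightarrow> nat \<Rightarrow> real) set" where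
  "ci_model n E i j K = {S \<in> model n E. ci_minor S i j K = 0}"

text \<open>The polynomial ring R[lambda, omega]: variables lambda_ij (i -> j in E) and omega_k.\<close>

datatype var = Lam nat nat | Om nat

type_synonym rpoly = "(var \<Rightarrow>\<^sub>0 nat) \<Rightarrow>\<^sub>0 real"

definition pvar :: "var \<Rightarrow> rpoly" where
  "pvar x = Poly_Mapping.single (Poly_Mapping.single x 1) 1"

definition Lam_poly :: "(nat \<times> nat) set \<Rightarrow> nat \<Rightarrow> nat \<Rightarrow> rpoly" where
  "Lam_poly E i j = (if (i, j) \<in> E then pvar (Lam i j) else 0)"

text \<open>phi_G^*(sigma_uv): the (u,v) entry of phi_G(Lambda, Omega) with symbolic parameters;
  phi_G^* of a minor is the corresponding minor of this symbolic matrix (ring hom).\<close>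

definition phi_star :: "nat \<Rightarrow> (nat \<times> nat) set \<Rightarrow> nat \<Rightarrow> nat \<Rightarrow> rpoly" where
  "phi_star n E = phi n (Lam_poly E) (\<lambda>k. pvar (Om k))"

definition principal_ideal :: "'a::comm_ring_1 \<Rightarrow> 'a set" where
  "principal_ideal g = {q * g | q. True}"

definition saturation :: "'a::comm_ring_1 set \<Rightarrow> 'a \<Rightarrow> 'a set" where
  "saturation I g = {f. \<exists>k::nat. f * g ^ k \<in> I}"

end

theory Submission
  imports Defs "Jordan_Normal_Form.Determinant"
begin

text \<open>Evaluating polynomials at the parameters (Lambda, Omega) of a point Sigma of the model is a
  ring homomorphism sending phi*(f) to f(Sigma). Applied to a relation
  det_{aC,bC} * P^k = q * det_{iK,jK}, where P is the product of all principal minors, it gives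
  det Sigma_{aC,bC} * P(Sigma)^k = 0 whenever det Sigma_{iK,jK} = 0. No principal minor of Sigma
  vanishes: Lambda is nilpotent because the graph is acyclic, so the Neumann sum inverts I - Lambda,
  and with Omega positive, Sigma = (I - Lambda)^{-T} Omega (I - Lambda)^{-1} is positive definite.\<close>

definition eval_monomial :: "('v \<Rightarrow> 'a::comm_ring_1) \<Rightarrow> ('v \<Rightarrow>\<^sub>0 nat) \<Rightarrow> 'a" where
  "eval_monomial x m = (\<Prod>v\<in>Poly_Mapping.keys m. x v ^ Poly_Mapping.lookup m v)"

definition eval_poly :: "('v \<Rightarrow> 'a::comm_ring_1) \<Rightarrow> (('v \<Rightarrow>\<^sub>0 nat) \<Rightarrow>\<^sub>0 'a) \<Rightarrow> 'a" where
  "eval_poly x p = (\<Sum>m\<in>Poly_Mapping.keys p. Poly_Mapping.lookup p m * eval_monomial x m)"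

lemma eval_monomial_superset:
  assumes "finite A" "Poly_Mapping.keys m \<subseteq> A"
  shows "eval_monomial x m = (\<Prod>v\<in>A. x v ^ Poly_Mapping.lookup m v)"
  unfolding eval_monomial_def using assms
  by (intro prod.mono_neutral_left) (auto simp: in_keys_iff)

lemma eval_monomial_add: "eval_monomial x (m + m') = eval_monomial x m * eval_monomial x m'"
proof -
  let ?A = "Poly_Mapping.keys m \<union> Poly_Mapping.keys m'"
  have "eval_monomial x (m + m') = (\<Prod>v\<in>?A. x v ^ Poly_Mapping.lookup (m + m') v)"
    by (simp add: eval_monomial_superset keys_add)
  also have "\<dots> = (\<Prod>v\<in>?A. x v ^ Poly_Mapping.lookup m v) * (\<Prod>v\<in>?A. x v ^ Poly_Mapping.lookup m' v)"
    by (simp add: lookup_add power_add prod.distrib)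
  also have "\<dots> = eval_monomial x m * eval_monomial x m'"
    by (simp add: eval_monomial_superset[of ?A])
  finally show ?thesis .
qed

lemma eval_poly_superset:
  assumes "finite A" "Poly_Mapping.keys p \<subseteq> A"
  shows "eval_poly x p = (\<Sum>m\<in>A. Poly_Mapping.lookup p m * eval_monomial x m)"
  unfolding eval_poly_def using assms
  by (intro sum.mono_neutral_left) (auto simp: in_keys_iff)

lemma eval_poly_add: "eval_poly x (p + q) = eval_poly x p + eval_poly x q"
proof -
  let ?A = "Poly_Mapping.keys p \<union> Poly_Mapping.keys q"
  have "eval_poly x (p + q) = (\<Sum>m\<in>?A. Poly_Mapping.lookup (p + q) m * eval_monomial x m)"
    by (simp add: eval_poly_superset keys_add)
  also have "\<dots> = (\<Sum>m\<in>?A. Poly_Mapping.lookup p m * eval_monomial x m)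
      + (\<Sum>m\<in>?A. Poly_Mapping.lookup q m * eval_monomial x m)"
    by (simp add: lookup_add distrib_right sum.distrib)
  also have "\<dots> = eval_poly x p + eval_poly x q"
    by (simp add: eval_poly_superset[of ?A])
  finally show ?thesis .
qed

lemma eval_poly_zero: "eval_poly x 0 = 0"
  by (simp add: eval_poly_def)

lemma eval_poly_sum: "eval_poly x (sum f A) = (\<Sum>a\<in>A. eval_poly x (f a))"
  by (induction A rule: infinite_finite_induct) (simp_all add: eval_poly_zero eval_poly_add)

lemma eval_poly_single: "eval_poly x (Poly_Mapping.single m c) = c * eval_monomial x m"
  by (cases "c = 0") (simp_all add: eval_poly_def)

lemma sum_single_lookup:
  "(\<Sum>m\<in>Poly_Mapping.keys p. Poly_Mapping.single m (Poly_Mapping.lookup p m)) = p"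
  by (rule poly_mapping_eqI)
    (simp add: lookup_sum lookup_single when_def in_keys_iff sum.delta' split: if_splits)

lemma eval_poly_mult: "eval_poly x (p * q) = eval_poly x p * eval_poly x q"
proof -
  let ?mon = "\<lambda>p m. Poly_Mapping.single m (Poly_Mapping.lookup p m)"
  have "eval_poly x (p * q) = eval_poly x
      ((\<Sum>m\<in>Poly_Mapping.keys p. ?mon p m) * (\<Sum>m'\<in>Poly_Mapping.keys q. ?mon q m'))"
    by (simp only: sum_single_lookup)
  also have "\<dots> = (\<Sum>m\<in>Poly_Mapping.keys p. \<Sum>m'\<in>Poly_Mapping.keys q.
      Poly_Mapping.lookup p m * eval_monomial x m * (Poly_Mapping.lookup q m' * eval_monomial x m'))"
    by (simp add: sum_product eval_poly_sum mult_single eval_poly_single eval_monomial_add mult_ac)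
  also have "\<dots> = eval_poly x p * eval_poly x q"
    by (simp add: eval_poly_def sum_product)
  finally show ?thesis .
qed

lemma eval_poly_one: "eval_poly x 1 = 1"
  using eval_poly_single[of x 0 1] by (simp add: eval_monomial_def)

interpretation eval_poly: comm_ring_hom "eval_poly x"
  by unfold_locales (simp_all add: eval_poly_zero eval_poly_add eval_poly_mult eval_poly_one)

lemma eval_poly_pvar: "eval_poly x (pvar v) = x v"
  by (simp add: pvar_def eval_poly_single eval_monomial_def)

context comm_ring_hom
begin

lemma hom_mat_pow: "hom (mat_pow n L k i j) = mat_pow n (\<lambda>i j. hom (L i j)) k i j"
  by (induction k arbitrary: i j) (simp_all add: mat_id_def mat_mult_def hom_distribs)

lemma hom_inv_I_minus: "hom (inv_I_minus n L i j) = inv_I_minus n (\<lambda>i j. hom (L i j)) i j"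
  by (simp add: inv_I_minus_def hom_distribs hom_mat_pow)

lemma hom_phi: "hom (phi n L w u v) = phi n (\<lambda>i j. hom (L i j)) (\<lambda>k. hom (w k)) u v"
  by (simp add: phi_def hom_distribs hom_inv_I_minus)

lemma hom_minor: "hom (minor M rs cs) = minor (\<lambda>i j. hom (M i j)) rs cs"
  by (simp add: minor_def hom_distribs)

end

definition param_valuation :: "(nat \<Rightarrow> nat \<Rightarrow> 'a) \<Rightarrow> (nat \<Rightarrow> 'a) \<Rightarrow> var \<Rightarrow> 'a" where
  "param_valuation L w v = (case v of Lam i j \<Rightarrow> L i j | Om k \<Rightarrow> w k)"

lemma eval_phi_star:
  assumes "\<And>i j. (i, j) \<notin> E \<Longrightarrow> L i j = 0"
  shows "eval_poly (param_valuation L w) (phi_star n E u v) = phi n L w u v"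
proof -
  have "(\<lambda>i j. eval_poly (param_valuation L w) (Lam_poly E i j)) = L"
    using assms by (auto intro!: ext simp: Lam_poly_def eval_poly_pvar param_valuation_def eval_poly_zero)
  then show ?thesis
    by (simp add: phi_star_def eval_poly.hom_phi eval_poly_pvar param_valuation_def)
qed

lemma eval_minor_phi_star:
  assumes "\<And>i j. (i, j) \<notin> E \<Longrightarrow> L i j = 0"
  shows "eval_poly (param_valuation L w) (minor (phi_star n E) rs cs) = minor (phi n L w) rs cs"
  by (simp add: eval_poly.hom_minor eval_phi_star[OF assms])

lemma mat_mult_assoc:
  "mat_mult n (mat_mult n A B) C i j = mat_mult n A (mat_mult n B C) i j"
  unfolding mat_mult_def sum_distrib_left sum_distrib_right
  by (subst sum.swap) (simp add: mult.assoc)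

lemma mat_mult_mat_id_right: "mat_mult n A mat_id i j = (if j \<in> {1..n} then A i j else 0)"
  by (simp add: mat_mult_def mat_id_def if_distrib[of "(*) _"] sum.delta' cong: if_cong)

lemma mat_mult_mat_id_left: "mat_mult n mat_id A i j = (if i \<in> {1..n} then A i j else 0)"
  by (simp add: mat_mult_def mat_id_def if_distrib[of "\<lambda>c. c * _"] cong: if_cong)

lemma mat_pow_Suc_left:
  assumes support: "\<And>i j. L i j \<noteq> 0 \<Longrightarrow> i \<in> {1..n} \<and> j \<in> {1..n}"
  shows "mat_mult n L (mat_pow n L k) i j = mat_pow n L (Suc k) i j"
proof (induction k arbitrary: i j)
  case 0
  show ?case using support by (auto simp: mat_mult_mat_id_left mat_mult_mat_id_right)
next
  case (Suc k)
  have "mat_mult n L (mat_pow n L (Suc k)) i j = mat_mult n (mat_mult n L (mat_pow n L k)) L i j"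
    by (simp add: mat_mult_assoc)
  also have "\<dots> = mat_mult n (mat_pow n L (Suc k)) L i j"
    using Suc.IH by (simp add: mat_mult_def)
  finally show ?case by simp
qed

lemma inv_I_minus_left_inverse:
  assumes support: "\<And>i j. L i j \<noteq> 0 \<Longrightarrow> i \<in> {1..n} \<and> j \<in> {1..n}"
    and nilpotent: "\<And>i j. mat_pow n L n i j = 0"
  shows "inv_I_minus n L i j - mat_mult n L (inv_I_minus n L) i j = mat_id i j"
proof -
  have "mat_mult n L (inv_I_minus n L) i j = (\<Sum>k<n. mat_mult n L (mat_pow n L k) i j)"
    unfolding mat_mult_def inv_I_minus_def sum_distrib_left by (rule sum.swap)
  also have "\<dots> = (\<Sum>k<n. mat_pow n L (Suc k) i j)"
    by (intro sum.cong refl mat_pow_Suc_left support)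
  finally have "inv_I_minus n L i j - mat_mult n L (inv_I_minus n L) i j
      = - (\<Sum>k<n. mat_pow n L (Suc k) i j - mat_pow n L k i j)"
    by (simp add: inv_I_minus_def sum_subtractf del: mat_pow.simps)
  also have "\<dots> = mat_pow n L 0 i j - mat_pow n L n i j"
    by (subst sum_lessThan_telescope) simp
  finally show ?thesis
    by (simp add: nilpotent)
qed

lemma mat_pow_nonzero_imp_relpow:
  assumes L: "\<And>i j. (i, j) \<notin> E \<Longrightarrow> L i j = 0"
  shows "mat_pow n L k i j \<noteq> 0 \<Longrightarrow> (i, j) \<in> E ^^ k"
proof (induction k arbitrary: j)
  case 0
  then show ?case by (simp add: mat_id_def split: if_splits)
next
  case (Suc k)
  then have "(\<Sum>m\<in>{1..n}. mat_pow n L k i m * L m j) \<noteq> 0"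
    by (simp add: mat_mult_def)
  then obtain m where "mat_pow n L k i m * L m j \<noteq> 0"
    by (meson sum.neutral)
  then have "mat_pow n L k i m \<noteq> 0" "L m j \<noteq> 0"
    by auto
  then have "(i, m) \<in> E ^^ k" "(m, j) \<in> E"
    using Suc.IH L by blast+
  then show ?case
    by (rule relpow_Suc_I)
qed

lemma acyclic_relpow_eq_empty:
  assumes acyclic: "acyclic E" and E: "E \<subseteq> V \<times> V" and V: "finite V"
    and k: "0 < k" "card V \<le> k"
  shows "E ^^ k = {}"
proof (rule ccontr)
  assume "E ^^ k \<noteq> {}"
  then obtain f where "\<forall>t<k. (f t, f (Suc t)) \<in> E"
    by (auto simp: relpow_fun_conv)
  then have f: "\<And>t. t < k \<Longrightarrow> (f t, f (Suc t)) \<in> E"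
    by blast
  have "f t \<in> V" if "t \<le> k" for t
  proof (cases "t < k")
    case True
    then show ?thesis using f E by blast
  next
    case False
    then have "t = Suc (k - 1)" using that k by simp
    then show ?thesis using f[of "k - 1"] E k by auto
  qed
  then have "card (f ` {0..k}) \<le> card V"
    by (intro card_mono[OF V]) auto
  also have "\<dots> < card {0..k}"
    using k by simp
  finally have "\<not> inj_on f {0..k}"
    by (rule pigeonhole)
  then obtain s t where st: "s < t" "t \<le> k" "f s = f t"
    unfolding inj_on_def by (metis atLeastAtMost_iff linorder_neqE_nat)
  have "(f s, f t) \<in> E ^^ (t - s)"
    unfolding relpow_fun_conv using f st by (intro exI[of _ "\<lambda>d. f (s + d)"]) auto
  then have "(f s, f s) \<in> E\<^sup>+"
    unfolding trancl_power using st by (intro exI[of _ "t - s"]) simp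
  with acyclic show False
    by (simp add: acyclic_def)
qed

lemma dag_mat_pow_nilpotent:
  assumes dag: "is_dag n E" and n: "0 < n" and L: "\<And>i j. (i, j) \<notin> E \<Longrightarrow> L i j = 0"
  shows "mat_pow n L n i j = 0"
proof (rule ccontr)
  assume "mat_pow n L n i j \<noteq> 0"
  then have "(i, j) \<in> E ^^ n"
    by (metis L mat_pow_nonzero_imp_relpow)
  moreover have "E ^^ n = {}"
    using dag n unfolding is_dag_def by (intro acyclic_relpow_eq_empty[of E "{1..n}"]) simp_all
  ultimately show False
    by simp
qed

lemma minor_eq_det:
  "minor M rs cs = det (mat (length rs) (length rs) (\<lambda>(t, u). M (rs ! t) (cs ! u)))"
  unfolding minor_def det_def
  by (auto simp: atLeast0LessThan permutes_def intro!: sum.cong prod.cong)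

lemma minor_eq_zero_imp_kernel:
  fixes M :: "nat \<Rightarrow> nat \<Rightarrow> 'a::idom"
  assumes "minor M rs rs = 0"
  obtains v where "\<exists>u<length rs. v u \<noteq> 0"
    and "\<And>t. t < length rs \<Longrightarrow> (\<Sum>u<length rs. M (rs ! t) (rs ! u) * v u) = 0"
proof -
  let ?A = "mat (length rs) (length rs) (\<lambda>(t, u). M (rs ! t) (rs ! u))"
  have "?A \<in> carrier_mat (length rs) (length rs)" by simp
  then obtain x where x: "x \<in> carrier_vec (length rs)" "x \<noteq> 0\<^sub>v (length rs)"
      "?A *\<^sub>v x = 0\<^sub>v (length rs)"
    using assms det_0_iff_vec_prod_zero by (metis minor_eq_det)
  show ?thesis
  proof
    show "\<exists>u<length rs. x $ u \<noteq> 0"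
      using x(1,2) by (metis eq_vecI carrier_vecD index_zero_vec(1,2))
    show "(\<Sum>u<length rs. M (rs ! t) (rs ! u) * x $ u) = 0" if "t < length rs" for t
      using arg_cong[OF x(3), of "\<lambda>y. y $ t"] x(1) that
      by (simp add: scalar_prod_def atLeast0LessThan)
  qed
qed

lemma gram_kernel_imp_kernel:
  fixes A :: "nat \<Rightarrow> nat \<Rightarrow> real"
  assumes w: "\<And>k. k \<in> {1..n} \<Longrightarrow> w k > 0"
    and kernel: "\<And>t. t < length rs \<Longrightarrow>
      (\<Sum>u<length rs. (\<Sum>k\<in>{1..n}. A k (rs ! t) * w k * A k (rs ! u)) * v u) = 0"
    and k: "k \<in> {1..n}"
  shows "(\<Sum>u<length rs. A k (rs ! u) * v u) = 0"
proof -
  define y where "y k = (\<Sum>u<length rs. A k (rs ! u) * v u)" for k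
  have "(\<Sum>k\<in>{1..n}. w k * y k ^ 2) = (\<Sum>t<length rs. v t *
      (\<Sum>u<length rs. (\<Sum>k\<in>{1..n}. A k (rs ! t) * w k * A k (rs ! u)) * v u))"
    unfolding y_def power2_eq_square sum_distrib_left sum_distrib_right
    by (subst sum.swap, rule sum.cong, simp, subst sum.swap) (simp add: sum_distrib_left mult_ac)
  also have "\<dots> = 0"
    using kernel by (intro sum.neutral) force
  finally have "w k * y k ^ 2 = 0"
    using w k by (subst (asm) sum_nonneg_eq_0_iff) (auto simp: less_imp_le)
  then show ?thesis
    using w[OF k] by (simp add: y_def)
qed

lemma inv_I_minus_columns_independent:
  assumes support: "\<And>i j. L i j \<noteq> 0 \<Longrightarrow> i \<in> {1..n} \<and> j \<in> {1..n}"
    and nilpotent: "\<And>i j. mat_pow n L n i j = 0"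
    and rs: "distinct rs" "set rs \<subseteq> {1..n}"
    and kernel: "\<And>k. k \<in> {1..n} \<Longrightarrow> (\<Sum>u<length rs. inv_I_minus n L k (rs ! u) * v u) = 0"
    and t: "t < length rs"
  shows "v t = 0"
proof -
  let ?p = "rs ! t"
  have "(\<Sum>u<length rs. v u * mat_id ?p (rs ! u)) = (\<Sum>u<length rs. v u *
      (inv_I_minus n L ?p (rs ! u) - mat_mult n L (inv_I_minus n L) ?p (rs ! u)))"
    by (intro sum.cong refl arg_cong[where f = "(*) _"] inv_I_minus_left_inverse[symmetric] support nilpotent)
  also have "\<dots> = (\<Sum>u<length rs. inv_I_minus n L ?p (rs ! u) * v u)
      - (\<Sum>m\<in>{1..n}. L ?p m * (\<Sum>u<length rs. inv_I_minus n L m (rs ! u) * v u))"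
    unfolding mat_mult_def right_diff_distrib sum_subtractf sum_distrib_left
    by (subst (2) sum.swap) (simp add: mult_ac)
  also have "\<dots> = 0"
    using rs t kernel by (simp add: subset_iff)
  finally have "(\<Sum>u<length rs. v u * mat_id ?p (rs ! u)) = 0" .
  moreover have "(\<Sum>u<length rs. v u * mat_id ?p (rs ! u)) = v t"
    using rs t by (simp add: mat_id_def nth_eq_iff_index_eq if_distrib[of "(*) _"] sum.delta cong: if_cong)
  ultimately show ?thesis by simp
qed

lemma phi_principal_minor_nonzero:
  fixes L :: "nat \<Rightarrow> nat \<Rightarrow> real"
  assumes support: "\<And>i j. L i j \<noteq> 0 \<Longrightarrow> i \<in> {1..n} \<and> j \<in> {1..n}"
    and nilpotent: "\<And>i j. mat_pow n L n i j = 0"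
    and w: "\<And>k. k \<in> {1..n} \<Longrightarrow> w k > 0"
    and S: "S \<subseteq> {1..n}"
  shows "principal_minor (phi n L w) S \<noteq> 0"
proof
  let ?rs = "sorted_list_of_set S"
  have rs: "distinct ?rs" "set ?rs \<subseteq> {1..n}"
    using S finite_subset[OF S] by auto
  assume "principal_minor (phi n L w) S = 0"
  then have "minor (phi n L w) ?rs ?rs = 0"
    by (simp add: principal_minor_def)
  then obtain v where v: "\<exists>u<length ?rs. v u \<noteq> 0"
    and kernel: "\<And>t. t < length ?rs \<Longrightarrow> (\<Sum>u<length ?rs. phi n L w (?rs ! t) (?rs ! u) * v u) = 0"
    by (erule minor_eq_zero_imp_kernel)
  have columns_kernel: "(\<Sum>u<length ?rs. inv_I_minus n L k (?rs ! u) * v u) = 0"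
    if "k \<in> {1..n}" for k
    using w kernel[unfolded phi_def] that by (rule gram_kernel_imp_kernel)
  have "v t = 0" if "t < length ?rs" for t
    using support nilpotent rs columns_kernel that by (rule inv_I_minus_columns_independent)
  with v show False by blast
qed

lemma model_principal_minor_nonzero:
  assumes dag: "is_dag n E" and \<Sigma>: "\<Sigma> \<in> model n E" and S: "S \<subseteq> {1..n}"
  shows "principal_minor \<Sigma> S \<noteq> 0"
proof (cases "n = 0")
  case True
  then show ?thesis
    using S by (simp add: principal_minor_def minor_def)
next
  case False
  from \<Sigma> obtain L w where \<Sigma>_eq: "\<Sigma> = phi n L w" and L: "\<And>i j. (i, j) \<notin> E \<Longrightarrow> L i j = 0"
    and w: "\<And>k. k \<in> {1..n} \<Longrightarrow> w k > 0"
    by (auto simp: model_def)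
  have support: "i \<in> {1..n} \<and> j \<in> {1..n}" if "L i j \<noteq> 0" for i j
  proof -
    have "(i, j) \<in> E"
      using L that by blast
    then show ?thesis
      using dag by (auto simp: is_dag_def)
  qed
  have nilpotent: "mat_pow n L n i j = 0" for i j
    using False by (intro dag_mat_pow_nilpotent[OF dag] L) simp
  show ?thesis
    unfolding \<Sigma>_eq using support nilpotent w S by (rule phi_principal_minor_nonzero)
qed

theorem corollary3p6:
  fixes n :: nat and E :: "(nat \<times> nat) set" and i j a b :: nat and K C :: "nat set"
  assumes dag: "is_dag n E"
    and ij: "i \<in> {1..n}" "j \<in> {1..n}" "i \<noteq> j"
    and K: "K \<subseteq> {1..n} - {i, j}"
    and not_dsep: "\<not> d_separates E K i j"
    and ab: "a \<in> {1..n}" "b \<in> {1..n}" "a \<noteq> b"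
    and C: "C \<subseteq> {1..n} - {a, b}"
    and mem: "ci_minor (phi_star n E) a b C \<in>
       saturation (principal_ideal (ci_minor (phi_star n E) i j K))
                  (\<Prod>S\<in>Pow {1..n}. principal_minor (phi_star n E) S)"
  shows "\<forall>\<Sigma> \<in> ci_model n E i j K. ci_minor \<Sigma> a b C = 0"
proof
  fix \<Sigma> assume "\<Sigma> \<in> ci_model n E i j K"
  then have \<Sigma>: "\<Sigma> \<in> model n E" and ij_indep: "ci_minor \<Sigma> i j K = 0"
    by (auto simp: ci_model_def)
  then obtain L w where \<Sigma>_eq: "\<Sigma> = phi n L w" and L: "\<And>i j. (i, j) \<notin> E \<Longrightarrow> L i j = 0"
    by (auto simp: model_def)
  from mem obtain k q where "ci_minor (phi_star n E) a b C *
      (\<Prod>S\<in>Pow {1..n}. principal_minor (phi_star n E) S) ^ k = q * ci_minor (phi_star n E) i j K"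
    by (auto simp: saturation_def principal_ideal_def)
  from arg_cong[OF this, of "eval_poly (param_valuation L w)"]
  have "ci_minor \<Sigma> a b C * (\<Prod>S\<in>Pow {1..n}. principal_minor \<Sigma> S) ^ k
      = eval_poly (param_valuation L w) q * ci_minor \<Sigma> i j K"
    using L by (simp add: \<Sigma>_eq eval_poly.hom_mult eval_poly.hom_power eval_poly.hom_prod
        ci_minor_def principal_minor_def eval_minor_phi_star)
  moreover have "(\<Prod>S\<in>Pow {1..n}. principal_minor \<Sigma> S) \<noteq> 0"
    using model_principal_minor_nonzero[OF dag \<Sigma>] by simp
  ultimately show "ci_minor \<Sigma> a b C = 0"
    using ij_indep by simp
qed

end
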